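(* Let $m\ge 1$ and, for each unit $i\in[m]=\{1,\dots,m\}$, let $n_i\ge 2$ observations be generated as $X_{ij}=\mu_i+\epsilon_{ij}$, $j\in[n_i]$, where $\mu_i$ is an unknown constant and $\mathbb{E}(\epsilon_{ij})=0$. Let $\mathcal{H}_0=\{i\in[m]:\mu_i=0\}$ and write $\mathbf{X}_i=(X_{ij}:j\in[n_i])$. Assume that for every $i\in\mathcal{H}_0$ the errors $\{\epsilon_{ij}:j\in[n_i]\}$ are i.i.d. conditional on $(\mathbf{X}_1,\dots,\mathbf{X}_{i-1},\mathbf{X}_{i+1},\dots,\mathbf{X}_m)$, with a conditional density $f_i^{\epsilon}(\cdot\mid \mathbf{X}_1,\dots,\mathbf{X}_{i-1},\mathbf{X}_{i+1},\dots,\mathbf{X}_m)$ that is symmetric about zero, i.e. $f_i^{\epsilon}(-x\mid\cdot)=f_i^{\epsilon}(x\mid\cdot)$ for all $x$. Construct $(T_i,T_i^0)$, $i\in[m]$, as follows. Randomly (independently of the data) partition $[n_i]$ into $\mathcal{N}_{i1},\mathcal{N}_{i2}$ with $n_{i1}=|\mathcal{N}_{i1}|=\lceil n_i/2\rceil$ and $n_{i2}=n_i-n_{i1}$. Let $\bar X_{ik}=n_{ik}^{-1}\sum_{j\in\mathcal{N}_{ik}}X_{ij}$ and $S_{ik}^2=(n_{ik}-1)^{-1}\sum_{j\in\mathcal{N}_{ik}}(X_{ij}-\bar X_{ik})^2$ for $k=1,2$ (whenever $n_{ik}\ge 2$). Set $V_i=\bar X_{i1}+\bar X_{i2}$, $V_i^0=\bar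 X_{i1}-\bar X_{i2}$. - If $n_i\ge 4$: $S_i=\sqrt{\frac{n_i}{n_{i1}n_{i2}}\cdot\frac{(n_{i1}-1)S_{i1}^2+(n_{i2}-1)S_{i2}^2}{n_i-2}}$ and $T_i=\Phi^{-1}\{G_{t,n_i-2}(V_i/S_i)\}$, $T_i^0=\Phi^{-1}\{G_{t,n_i-2}(V_i^0/S_i)\}$. - If $n_i=3$: the same formulas for $T_i,T_i^0$ with $S_i$ replaced by $S_{i1}$. - If $n_i=2$: $T_i=(X_{i1}+X_{i2})/\sqrt2$ and $T_i^0=(X_{i1}-X_{i2})/\sqrt2$. Here $\Phi$ is the standard normal CDF and $G_{t,\nu}$ the CDF of the $t$-distribution with $\nu$ degrees of freedom. Then the pairs are pairwise exchangeable under the null: for every $i\in\mathcal{H}_0$, $$(T_i,T_i^0\mid \mathbf{T}_{-i},\mathbf{T}^0_{-i})\stackrel{d}{=}(T_i^0,T_i\mid \mathbf{T}_{-i},\mathbf{T}^0_{-i}),$$ where $\mathbf{T}_{-i}=(T_1,\dots,T_{i-1},T_{i+1},\dots,T_m)$ and $\mathbf{T}^0_{-i}=(T^0_1,\dots,T^0_{i-1},T^0_{i+1},\dots,T^0_m)$.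
   Context: $\stackrel{d}{=}$ denotes equality of (conditional) distributions. The random partitions are drawn independently of the data. *)

theory Defs
  imports "HOL-Probability.Probability"
begin

definition Phi :: "real \<Rightarrow> real" where
  "Phi x = cdf (density lborel std_normal_density) x"

definition Phi_inv :: "real \<Rightarrow> real" where
  "Phi_inv p = (THE x. Phi x = p)"

definition t_density :: "real \<Rightarrow> real \<Rightarrow> real" where
  "t_density \<nu> x = Gamma ((\<nu> + 1) / 2) / (sqrt (\<nu> * pi) * Gamma (\<nu> / 2))
      * (1 + x\<^sup>2 / \<nu>) powr (- (\<nu> + 1) / 2)"

definition G_t :: "nat \<Rightarrow> real \<Rightarrow> real" where
  "G_t \<nu> x = cdf (density lborel (t_density (real \<nu>))) x"

definition xbar :: "(nat \<Rightarrow> real) \<Rightarrow> nat set \<Rightarrow> real" where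
  "xbar x A = (\<Sum>j\<in>A. x j) / real (card A)"

definition svar :: "(nat \<Rightarrow> real) \<Rightarrow> nat set \<Rightarrow> real" where
  "svar x A = (\<Sum>j\<in>A. (x j - xbar x A)\<^sup>2) / (real (card A) - 1)"

(* (T_i, T_i^0) computed from the n_i observations x (indexed 0..nn-1) and
   the first part A = N_{i1} of the partition (N_{i2} = {0..nn-1} - A). *)
definition T_stat :: "nat \<Rightarrow> nat set \<Rightarrow> (nat \<Rightarrow> real) \<Rightarrow> real \<times> real" where
  "T_stat nn A x =
    (if nn = 2 then ((x 0 + x 1) / sqrt 2, (x 0 - x 1) / sqrt 2)
     else
      (let B = {..<nn} - A;
           n1 = real (card A); n2 = real (card B);
           V = xbar x A + xbar x B;
           V0 = xbar x A - xbar x B;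
           S = (if nn \<ge> 4
                then sqrt (real nn / (n1 * n2) *
                       (((n1 - 1) * svar x A + (n2 - 1) * svar x B) / (real nn - 2)))
                else sqrt (svar x A))
       in (Phi_inv (G_t (nn - 2) (V / S)), Phi_inv (G_t (nn - 2) (V0 / S)))))"

definition TT :: "(nat \<Rightarrow> nat) \<Rightarrow> (nat \<Rightarrow> 'a \<Rightarrow> nat set) \<Rightarrow> (nat \<Rightarrow> nat \<Rightarrow> 'a \<Rightarrow> real)
                   \<Rightarrow> nat \<Rightarrow> 'a \<Rightarrow> real \<times> real" where
  "TT n N1 X k \<omega> = T_stat (n k) (N1 k \<omega>) (\<lambda>j. X k j \<omega>)"

definition others_space :: "nat \<Rightarrow> (nat \<Rightarrow> nat) \<Rightarrow> nat \<Rightarrow> (nat \<Rightarrow> nat \<Rightarrow> real) measure" where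
  "others_space m n i = PiM ({..<m} - {i}) (\<lambda>k. PiM {..<n k} (\<lambda>_. borel))"

definition others_data :: "nat \<Rightarrow> (nat \<Rightarrow> nat) \<Rightarrow> (nat \<Rightarrow> nat \<Rightarrow> 'a \<Rightarrow> real) \<Rightarrow> nat
                          \<Rightarrow> 'a \<Rightarrow> nat \<Rightarrow> nat \<Rightarrow> real" where
  "others_data m n X i \<omega> = (\<lambda>k\<in>{..<m} - {i}. \<lambda>j\<in>{..<n k}. X k j \<omega>)"

definition cond_alg :: "'a measure \<Rightarrow> nat \<Rightarrow> (nat \<Rightarrow> nat) \<Rightarrow> (nat \<Rightarrow> 'a \<Rightarrow> nat set)
                        \<Rightarrow> (nat \<Rightarrow> nat \<Rightarrow> 'a \<Rightarrow> real) \<Rightarrow> nat \<Rightarrow> 'a measure" where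
  "cond_alg M m n N1 X i =
     vimage_algebra (space M) (\<lambda>\<omega>. \<lambda>k\<in>{..<m} - {i}. TT n N1 X k \<omega>)
       (PiM ({..<m} - {i}) (\<lambda>_. (borel :: (real \<times> real) measure)))"

end

theory Submission
  imports Defs
begin

(* The pair (T_i, T_i^0) is swapped by flipping the signs of the observations in the second half
   of the partition (of the second observation if n_i = 2). Conditionally on the data of the other
   units, the observations of a null unit are i.i.d. with a density symmetric about zero, so their
   joint law with the other units' data is invariant under every fixed sign flip. The partitions
   are independent of the data and take finitely many values, and on each value the flip is fixed;
   hence (T_-i, T^0_-i, T_i, T_i^0) and (T_-i, T^0_-i, T_i^0, T_i) have the same law. As the
   conditioning sigma-algebra is generated by (T_-i, T^0_-i), this equality of joint laws is exactly
   the almost sure equality of the two conditional probabilities. *)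

lemma borel_measurable_THE_inverse:
  fixes F :: "real \<Rightarrow> real"
  assumes "strict_mono F" and "continuous_on UNIV F"
  shows "(\<lambda>p. THE x. F x = p) \<in> borel_measurable borel"
proof (rule borel_measurable_piecewise_mono[of "{range F, - range F}"])
  have "is_interval (range F)"
    using connected_continuous_image[OF assms(2)] is_interval_connected_1 by blast
  then show "c \<in> sets borel" if "c \<in> {range F, - range F}" for c
    using that real_interval_borel_measurable by auto
  have inverse: "(THE x. F x = F y) = y" for y
    using strict_mono_eq[OF assms(1)] by blast
  have "mono_on (range F) (\<lambda>p. THE x. F x = p)"
    by (auto intro!: mono_onI simp: inverse strict_mono_less_eq[OF assms(1)])
  moreover have "(THE x. F x = p) = (THE x. False)" if "p \<notin> range F" for p
    using that by (metis rangeI)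
  then have "mono_on (- range F) (\<lambda>p. THE x. F x = p)"
    by (auto intro!: mono_onI)
  ultimately show "mono_on c (\<lambda>p. THE x. F x = p)" if "c \<in> {range F, - range F}" for c
    using that by auto
qed auto

lemma continuous_cdf_density:
  fixes g :: "real \<Rightarrow> real"
  assumes "finite_measure (density lborel g)" and "g \<in> borel_measurable borel"
  shows "continuous_on UNIV (cdf (density lborel g))"
proof -
  interpret finite_borel_measure "density lborel g"
    using assms(1) by (simp add: finite_borel_measure_def finite_borel_measure_axioms_def)
  have "emeasure (density lborel g) {x} = 0" for x
    using assms(2) by (subst emeasure_density) (auto intro!: nn_integral_null_set)
  then show ?thesis
    by (intro continuous_at_imp_continuous_on ballI) (simp add: isCont_cdf measure_def)
qed

lemma strict_mono_cdf_density:
  fixes g :: "real \<Rightarrow> real"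
  assumes "finite_measure (density lborel g)" and "g \<in> borel_measurable borel"
    and pos: "\<And>x. 0 < g x"
  shows "strict_mono (cdf (density lborel g))"
proof (rule strict_monoI)
  interpret finite_borel_measure "density lborel g"
    using assms(1) by (simp add: finite_borel_measure_def finite_borel_measure_axioms_def)
  fix x y :: real assume "x < y"
  have "emeasure (density lborel g) {x<..y} \<noteq> 0"
  proof
    assume "emeasure (density lborel g) {x<..y} = 0"
    then have "AE z in lborel. ennreal (g z) * indicator {x<..y} z = 0"
      using assms(2) by (subst (asm) emeasure_density) (simp_all add: nn_integral_0_iff_AE)
    then have "AE z in lborel. z \<notin> {x<..y}"
      by eventually_elim (use pos in \<open>auto simp: indicator_def ennreal_eq_0_iff not_le[symmetric]\<close>)
    then have "{x<..y} \<in> null_sets lborel"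
      by (subst AE_iff_null_sets) auto
    with \<open>x < y\<close> show False by (simp add: null_sets_def)
  qed
  then have "0 < measure (density lborel g) {x<..y}"
    by (simp add: emeasure_eq_measure zero_less_measure_iff)
  then show "cdf (density lborel g) x < cdf (density lborel g) y"
    using cdf_diff_eq[OF \<open>x < y\<close>] by simp
qed

lemma borel_measurable_cdf_density:
  fixes g :: "real \<Rightarrow> real"
  assumes [measurable]: "g \<in> borel_measurable borel"
  shows "cdf (density lborel g) \<in> borel_measurable borel"
proof -
  have "cdf (density lborel g) = (\<lambda>x. enn2real (\<integral>\<^sup>+ z. ennreal (g z) * of_bool (z \<le> x) \<partial>lborel))"
    by (auto simp: cdf_def measure_def emeasure_density indicator_def)
  also have "\<dots> \<in> borel_measurable borel"
    by (intro measurable_compose[OF _ borel_measurable_enn2real] lborel.borel_measurable_nn_integral)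
      measurable
  finally show ?thesis .
qed

lemma borel_measurable_Phi_inv [measurable]: "Phi_inv \<in> borel_measurable borel"
proof -
  have "finite_measure (density lborel std_normal_density)"
    using prob_space_normal_density[of 1 0] by (simp add: prob_space_def)
  then show ?thesis
    unfolding Phi_inv_def[abs_def] Phi_def[abs_def]
    using normal_density_pos[of 1 0]
    by (intro borel_measurable_THE_inverse strict_mono_cdf_density continuous_cdf_density)
      simp_all
qed

lemma borel_measurable_G_t [measurable]: "G_t \<nu> \<in> borel_measurable borel"
  unfolding G_t_def[abs_def] t_density_def
  by (intro borel_measurable_cdf_density) measurable

lemma T_stat_cong:
  assumes "\<And>j. j < nn \<Longrightarrow> x j = y j" and "A \<subseteq> {..<nn}"
  shows "T_stat nn A x = T_stat nn A y"
proof -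
  have "xbar x A = xbar y A" "xbar x ({..<nn} - A) = xbar y ({..<nn} - A)"
    using assms unfolding xbar_def by (auto intro!: sum.cong arg_cong2[where f = "(/)"])
  moreover have "svar x A = svar y A" "svar x ({..<nn} - A) = svar y ({..<nn} - A)"
    using assms calculation unfolding svar_def by (auto intro!: sum.cong arg_cong2[where f = "(/)"])
  ultimately show ?thesis
    using assms(1)[of 0] assms(1)[of 1] unfolding T_stat_def Let_def by simp
qed

lemma borel_measurable_T_stat:
  assumes "A \<subseteq> {..<nn}" and "\<And>j. j < nn \<Longrightarrow> x j \<in> borel_measurable N"
  shows "(\<lambda>\<omega>. T_stat nn A (\<lambda>j. x j \<omega>)) \<in> borel_measurable N"
proof -
  have [measurable]: "(\<lambda>\<omega>. if j < nn then x j \<omega> else 0) \<in> borel_measurable N" for j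
    using assms(2)[of j] by (cases "j < nn") simp_all
  have "(\<lambda>\<omega>. T_stat nn A (\<lambda>j. if j < nn then x j \<omega> else 0)) \<in> borel_measurable N"
    unfolding T_stat_def Let_def xbar_def svar_def by measurable
  moreover have "T_stat nn A (\<lambda>j. if j < nn then x j \<omega> else 0) = T_stat nn A (\<lambda>j. x j \<omega>)" for \<omega>
    using assms(1) by (intro T_stat_cong) simp_all
  ultimately show ?thesis by simp
qed

definition sign_flip :: "'i set \<Rightarrow> ('i \<Rightarrow> real) \<Rightarrow> 'i \<Rightarrow> real" where
  "sign_flip b x j = (if j \<in> b then - x j else x j)"

(* Flipping the signs of these observations swaps T and T^0: for two observations it turns the
   sum into the difference; otherwise it negates the mean of the second half and leaves both
   sample variances unchanged. *)
definition flip_set :: "nat \<Rightarrow> nat set \<Rightarrow> nat set" where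
  "flip_set nn A = (if nn = 2 then {1} else {..<nn} - A)"

lemma flip_set_subset: "flip_set nn A \<subseteq> {..<nn}"
  by (auto simp: flip_set_def)

lemma T_stat_sign_flip: "T_stat nn A (sign_flip (flip_set nn A) x) = prod.swap (T_stat nn A x)"
proof (cases "nn = 2")
  case True
  then show ?thesis
    by (simp add: T_stat_def sign_flip_def flip_set_def diff_divide_distrib add_divide_distrib)
next
  case False
  define B where "B = {..<nn} - A"
  define y where "y = sign_flip B x"
  have yA: "y j = x j" if "j \<in> A" for j
    using that by (simp add: y_def B_def sign_flip_def)
  have yB: "y j = - x j" if "j \<in> B" for j
    using that by (simp add: y_def sign_flip_def)
  have mean_A: "xbar y A = xbar x A"
    by (simp add: xbar_def yA cong: sum.cong)
  have mean_B: "xbar y B = - xbar x B"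
    by (simp add: xbar_def yB sum_negf cong: sum.cong)
  have "svar y A = svar x A"
    by (simp add: svar_def mean_A yA cong: sum.cong)
  moreover have "svar y B = svar x B"
    unfolding svar_def using yB mean_B by (simp add: power2_commute cong: sum.cong)
  ultimately show ?thesis
    using False mean_A mean_B unfolding T_stat_def Let_def flip_set_def y_def B_def by simp
qed

lemma measurable_sign_flip:
  assumes "b \<subseteq> I"
  shows "sign_flip b \<in> PiM I (\<lambda>_. borel) \<rightarrow>\<^sub>M PiM I (\<lambda>_. borel)"
  unfolding sign_flip_def[abs_def]
proof (rule measurable_PiM_single')
  show "(\<lambda>x. if j \<in> b then - x j else x j) \<in> borel_measurable (PiM I (\<lambda>_. borel :: real measure))"
    if "j \<in> I" for j
    using that by (cases "j \<in> b") (auto intro!: borel_measurable_uminus measurable_component_singleton)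
  show "(\<lambda>x j. if j \<in> b then - x j else x j)
      \<in> space (PiM I (\<lambda>_. borel)) \<rightarrow> (\<Pi>\<^sub>E j\<in>I. space (borel :: real measure))"
    using assms by (auto simp: space_PiM PiE_iff extensional_def)
qed

lemma emeasure_lborel_uminus_vimage:
  assumes "A \<in> sets borel"
  shows "emeasure lborel (uminus -` A :: real set) = emeasure lborel A"
  using assms emeasure_distr[of uminus lborel borel A] by (simp add: lborel_distr_uminus)

lemma measurable_sign_flip_lborel:
  assumes "b \<subseteq> I"
  shows "sign_flip b \<in> PiM I (\<lambda>_. lborel) \<rightarrow>\<^sub>M PiM I (\<lambda>_. lborel)"
proof -
  have sets_eq: "sets (PiM I (\<lambda>_. lborel)) = sets (PiM I (\<lambda>_. borel :: real measure))"
    by (rule sets_PiM_cong) simp_all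
  show ?thesis
    by (subst measurable_cong_sets[OF sets_eq sets_eq]) (rule measurable_sign_flip[OF assms])
qed

lemma distr_sign_flip_lborel:
  fixes I :: "'i set"
  assumes "finite I" and "b \<subseteq> I"
  shows "distr (PiM I (\<lambda>_. lborel)) (PiM I (\<lambda>_. lborel)) (sign_flip b) = PiM I (\<lambda>_. lborel)"
proof -
  interpret product_sigma_finite "\<lambda>_. lborel :: real measure" ..
  show ?thesis
  proof (rule PiM_eqI)
    show "finite I" by fact
    show "sets (distr (PiM I (\<lambda>_. lborel)) (PiM I (\<lambda>_. lborel)) (sign_flip b)) = sets (PiM I (\<lambda>_. lborel))"
      by simp
    fix A :: "'i \<Rightarrow> real set" assume A: "\<And>j. j \<in> I \<Longrightarrow> A j \<in> sets lborel"
    define A' where "A' j = (if j \<in> b then uminus -` A j else A j)" for j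
    have A': "A' j \<in> sets lborel" if "j \<in> I" for j
      using A[OF that] measurable_sets_borel[OF borel_measurable_uminus[OF measurable_ident_sets[OF refl]]]
      unfolding A'_def by (cases "j \<in> b") auto
    have "x \<in> sign_flip b -` Pi\<^sub>E I A \<longleftrightarrow> x \<in> Pi\<^sub>E I A'" if "x \<in> space (PiM I (\<lambda>_. lborel))" for x
      using that assms(2) by (auto simp: sign_flip_def A'_def space_PiM PiE_def Pi_def extensional_def)
    then have preimage: "sign_flip b -` Pi\<^sub>E I A \<inter> space (PiM I (\<lambda>_. lborel)) = Pi\<^sub>E I A'"
      using PiE_mono[of I A' "\<lambda>_. UNIV"] by (auto simp: space_PiM)
    have "Pi\<^sub>E I A \<in> sets (PiM I (\<lambda>_. lborel))"
      using assms(1) A by (rule sets_PiM_I_finite)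
    then have "emeasure (distr (PiM I (\<lambda>_. lborel)) (PiM I (\<lambda>_. lborel)) (sign_flip b)) (Pi\<^sub>E I A)
        = emeasure (PiM I (\<lambda>_. lborel)) (sign_flip b -` Pi\<^sub>E I A \<inter> space (PiM I (\<lambda>_. lborel)))"
      by (rule emeasure_distr[OF measurable_sign_flip_lborel[OF assms(2)]])
    also have "\<dots> = emeasure (PiM I (\<lambda>_. lborel)) (Pi\<^sub>E I A')"
      by (simp only: preimage)
    also have "\<dots> = (\<Prod>j\<in>I. emeasure lborel (A' j))"
      using A' assms(1) by (subst emeasure_PiM) auto
    also have "\<dots> = (\<Prod>j\<in>I. emeasure lborel (A j))"
      using A by (intro prod.cong) (auto simp: A'_def emeasure_lborel_uminus_vimage)
    finally show "emeasure (distr (PiM I (\<lambda>_. lborel)) (PiM I (\<lambda>_. lborel)) (sign_flip b)) (Pi\<^sub>E I A)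
        = (\<Prod>j\<in>I. emeasure lborel (A j))" .
  qed
qed

lemma nn_integral_sign_flip_symmetric_product:
  fixes h :: "real \<Rightarrow> real" and g :: "('i \<Rightarrow> real) \<Rightarrow> ennreal"
  assumes "finite I" and "b \<subseteq> I" and [measurable]: "h \<in> borel_measurable borel"
    and h_even: "\<And>x. h (- x) = h x" and [measurable]: "g \<in> borel_measurable (PiM I (\<lambda>_. borel))"
  shows "(\<integral>\<^sup>+ e. g (sign_flip b e) * (\<Prod>j\<in>I. ennreal (h (e j))) \<partial>PiM I (\<lambda>_. lborel))
       = (\<integral>\<^sup>+ e. g e * (\<Prod>j\<in>I. ennreal (h (e j))) \<partial>PiM I (\<lambda>_. lborel))"
proof -
  define G where "G e = g e * (\<Prod>j\<in>I. ennreal (h (e j)))" for e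
  have G_meas: "G \<in> borel_measurable (PiM I (\<lambda>_. lborel))"
    unfolding G_def by measurable
  have "h (sign_flip b e j) = h (e j)" for e j
    by (simp add: sign_flip_def h_even)
  then have "(\<integral>\<^sup>+ e. g (sign_flip b e) * (\<Prod>j\<in>I. ennreal (h (e j))) \<partial>PiM I (\<lambda>_. lborel))
      = (\<integral>\<^sup>+ e. G (sign_flip b e) \<partial>PiM I (\<lambda>_. lborel))"
    by (simp add: G_def)
  also have "\<dots> = (\<integral>\<^sup>+ e. G e \<partial>distr (PiM I (\<lambda>_. lborel)) (PiM I (\<lambda>_. lborel)) (sign_flip b))"
    using G_meas by (simp add: nn_integral_distr[OF measurable_sign_flip_lborel[OF assms(2)]])
  finally show ?thesis
    by (simp add: distr_sign_flip_lborel[OF assms(1,2)] G_def)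
qed

lemma emeasure_sign_flip_eq_of_symmetric_density:
  fixes Y :: "'a \<Rightarrow> 'y" and Z :: "'a \<Rightarrow> 'i \<Rightarrow> real" and f :: "'y \<Rightarrow> real \<Rightarrow> real"
  assumes Y: "Y \<in> M \<rightarrow>\<^sub>M N" and Z: "Z \<in> M \<rightarrow>\<^sub>M PiM I (\<lambda>_. borel)"
    and I: "finite I" "b \<subseteq> I"
    and f_meas: "\<And>y. y \<in> space N \<Longrightarrow> f y \<in> borel_measurable borel"
    and f_even: "\<And>y x. f y (- x) = f y x"
    and density: "\<And>D B. D \<in> sets N \<Longrightarrow> B \<in> sets (PiM I (\<lambda>_. borel)) \<Longrightarrow>
      emeasure M {\<omega>\<in>space M. Y \<omega> \<in> D \<and> Z \<omega> \<in> B} =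
      (\<integral>\<^sup>+ \<omega>. indicator D (Y \<omega>) *
         (\<integral>\<^sup>+ e. indicator B e * (\<Prod>j\<in>I. ennreal (f (Y \<omega>) (e j))) \<partial>PiM I (\<lambda>_. lborel)) \<partial>M)"
    and D: "D \<in> sets N" and B: "B \<in> sets (PiM I (\<lambda>_. borel))"
  shows "emeasure M {\<omega>\<in>space M. Y \<omega> \<in> D \<and> sign_flip b (Z \<omega>) \<in> B}
       = emeasure M {\<omega>\<in>space M. Y \<omega> \<in> D \<and> Z \<omega> \<in> B}"
proof -
  define dens where
    "dens \<omega> B = (\<integral>\<^sup>+ e. indicator B e * (\<Prod>j\<in>I. ennreal (f (Y \<omega>) (e j))) \<partial>PiM I (\<lambda>_. lborel))"
    for \<omega> B
  define B' where "B' = sign_flip b -` B \<inter> space (PiM I (\<lambda>_. borel :: real measure))"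
  have B': "B' \<in> sets (PiM I (\<lambda>_. borel))"
    unfolding B'_def using measurable_sign_flip[OF I(2)] B by (rule measurable_sets)
  have dens_B': "dens \<omega> B' = dens \<omega> B" if "\<omega> \<in> space M" for \<omega>
  proof -
    have "dens \<omega> B' = (\<integral>\<^sup>+ e. indicator B (sign_flip b e) * (\<Prod>j\<in>I. ennreal (f (Y \<omega>) (e j)))
        \<partial>PiM I (\<lambda>_. lborel))"
      unfolding dens_def by (intro nn_integral_cong) (simp add: B'_def indicator_def space_PiM)
    also have "\<dots> = dens \<omega> B"
      unfolding dens_def
      using I f_meas[OF measurable_space[OF Y that]] f_even borel_measurable_indicator[OF B]
      by (rule nn_integral_sign_flip_symmetric_product)
    finally show ?thesis .
  qed
  have "{\<omega>\<in>space M. Y \<omega> \<in> D \<and> sign_flip b (Z \<omega>) \<in> B} = {\<omega>\<in>space M. Y \<omega> \<in> D \<and> Z \<omega> \<in> B'}"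
    using measurable_space[OF Z] by (auto simp: B'_def)
  also have "emeasure M \<dots> = (\<integral>\<^sup>+ \<omega>. indicator D (Y \<omega>) * dens \<omega> B' \<partial>M)"
    unfolding dens_def by (rule density[OF D B'])
  also have "\<dots> = (\<integral>\<^sup>+ \<omega>. indicator D (Y \<omega>) * dens \<omega> B \<partial>M)"
    by (intro nn_integral_cong) (simp add: dens_B')
  also have "\<dots> = emeasure M {\<omega>\<in>space M. Y \<omega> \<in> D \<and> Z \<omega> \<in> B}"
    unfolding dens_def by (rule density[OF D B, symmetric])
  finally show ?thesis .
qed

lemma (in finite_measure) measure_eq_by_finite_cases:
  assumes "finite C" and g: "\<And>\<omega>. \<omega> \<in> space M \<Longrightarrow> g \<omega> \<in> C"
    and P: "\<And>c. c \<in> C \<Longrightarrow> {\<omega>\<in>space M. g \<omega> = c \<and> P c \<omega>} \<in> sets M"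
    and Q: "\<And>c. c \<in> C \<Longrightarrow> {\<omega>\<in>space M. g \<omega> = c \<and> Q c \<omega>} \<in> sets M"
    and eq: "\<And>c. c \<in> C \<Longrightarrow>
      measure M {\<omega>\<in>space M. g \<omega> = c \<and> P c \<omega>} = measure M {\<omega>\<in>space M. g \<omega> = c \<and> Q c \<omega>}"
  shows "measure M {\<omega>\<in>space M. P (g \<omega>) \<omega>} = measure M {\<omega>\<in>space M. Q (g \<omega>) \<omega>}"
proof -
  have split: "measure M {\<omega>\<in>space M. R (g \<omega>) \<omega>} = (\<Sum>c\<in>C. measure M {\<omega>\<in>space M. g \<omega> = c \<and> R c \<omega>})"
    if "\<And>c. c \<in> C \<Longrightarrow> {\<omega>\<in>space M. g \<omega> = c \<and> R c \<omega>} \<in> sets M" for R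
  proof -
    have "{\<omega>\<in>space M. R (g \<omega>) \<omega>} = (\<Union>c\<in>C. {\<omega>\<in>space M. g \<omega> = c \<and> R c \<omega>})"
      using g by auto
    moreover have "disjoint_family_on (\<lambda>c. {\<omega>\<in>space M. g \<omega> = c \<and> R c \<omega>}) C"
      by (auto simp: disjoint_family_on_def)
    ultimately show ?thesis
      using \<open>finite C\<close> that by (auto intro!: finite_measure_finite_Union)
  qed
  show ?thesis
    using eq by (simp add: split[OF P] split[OF Q])
qed

lemma set_integral_indicator_vimage:
  "(\<integral>\<omega>\<in>S -` D \<inter> space M. indicator A (W \<omega>) \<partial>M) = measure M {\<omega>\<in>space M. S \<omega> \<in> D \<and> W \<omega> \<in> A}"
proof -
  have "(\<integral>\<omega>\<in>S -` D \<inter> space M. indicator A (W \<omega>) \<partial>M)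
      = (\<integral>\<omega>. indicator {\<omega>\<in>space M. S \<omega> \<in> D \<and> W \<omega> \<in> A} \<omega> \<partial>M)"
    unfolding set_lebesgue_integral_def by (intro Bochner_Integration.integral_cong) (auto simp: indicator_def)
  also have "\<dots> = measure M {\<omega>\<in>space M. S \<omega> \<in> D \<and> W \<omega> \<in> A}"
    by (simp add: Int_absorb2 subset_iff)
  finally show ?thesis .
qed

lemma (in prob_space) AE_real_cond_exp_indicator_eq:
  assumes S: "S \<in> M \<rightarrow>\<^sub>M N" and U: "U \<in> M \<rightarrow>\<^sub>M K" and V: "V \<in> M \<rightarrow>\<^sub>M K" and A: "A \<in> sets K"
    and joint: "\<And>D. D \<in> sets N \<Longrightarrow>
      prob {\<omega>\<in>space M. S \<omega> \<in> D \<and> U \<omega> \<in> A} = prob {\<omega>\<in>space M. S \<omega> \<in> D \<and> V \<omega> \<in> A}"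
  shows "AE \<omega> in M. real_cond_exp M (vimage_algebra (space M) S N) (\<lambda>\<omega>. indicator A (U \<omega>)) \<omega>
    = real_cond_exp M (vimage_algebra (space M) S N) (\<lambda>\<omega>. indicator A (V \<omega>)) \<omega>"
proof -
  define F where "F = vimage_algebra (space M) S N"
  have sets_F: "sets F = {S -` D \<inter> space M | D. D \<in> sets N}"
    unfolding F_def using measurable_space[OF S] by (intro sets_vimage_algebra2) auto
  have "space F = space M"
    by (simp add: F_def)
  then have "subalgebra M F"
    using measurable_sets[OF S] by (auto simp: subalgebra_def sets_F)
  then interpret finite_measure_subalgebra M F
    by unfold_locales
  note A [measurable]
  have integrable: "integrable M (\<lambda>\<omega>. indicator A (W \<omega>) :: real)" if "W \<in> M \<rightarrow>\<^sub>M K" for W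
    using that by (intro integrable_const_bound[where B = 1]) (auto simp: indicator_def)
  have "AE \<omega> in M. real_cond_exp M F (\<lambda>\<omega>. indicator A (U \<omega>)) \<omega>
      = real_cond_exp M F (\<lambda>\<omega>. indicator A (V \<omega>)) \<omega>"
  proof (rule real_cond_exp_charact)
    fix C assume "C \<in> sets F"
    then obtain D where D: "D \<in> sets N" and C: "C = S -` D \<inter> space M"
      by (auto simp: sets_F)
    have "(\<integral>\<omega>\<in>C. indicator A (U \<omega>) \<partial>M) = prob {\<omega>\<in>space M. S \<omega> \<in> D \<and> U \<omega> \<in> A}"
      unfolding C by (rule set_integral_indicator_vimage)
    also have "\<dots> = prob {\<omega>\<in>space M. S \<omega> \<in> D \<and> V \<omega> \<in> A}"
      by (rule joint[OF D])
    also have "\<dots> = (\<integral>\<omega>\<in>C. indicator A (V \<omega>) \<partial>M)"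
      unfolding C by (rule set_integral_indicator_vimage[symmetric])
    also have "\<dots> = (\<integral>\<omega>\<in>C. real_cond_exp M F (\<lambda>\<omega>. indicator A (V \<omega>)) \<omega> \<partial>M)"
      by (rule real_cond_exp_intA[OF integrable[OF V] \<open>C \<in> sets F\<close>])
    finally show "(\<integral>\<omega>\<in>C. indicator A (U \<omega>) \<partial>M) = (\<integral>\<omega>\<in>C. real_cond_exp M F (\<lambda>\<omega>. indicator A (V \<omega>)) \<omega> \<partial>M)" .
  qed (use integrable[OF U] integrable[OF V] in auto)
  then show ?thesis
    by (simp add: F_def)
qed

locale random_partition_model = prob_space M
  for M :: "'a measure" and m :: nat and n :: "nat \<Rightarrow> nat"
    and X :: "nat \<Rightarrow> nat \<Rightarrow> 'a \<Rightarrow> real" and N1 :: "nat \<Rightarrow> 'a \<Rightarrow> nat set" and i :: nat +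
  assumes X_measurable: "\<And>k j. k < m \<Longrightarrow> j < n k \<Longrightarrow> X k j \<in> borel_measurable M"
    and N1_subset: "\<And>k \<omega>. k < m \<Longrightarrow> \<omega> \<in> space M \<Longrightarrow> N1 k \<omega> \<subseteq> {..<n k}"
    and partitions_measurable:
      "(\<lambda>\<omega>. \<lambda>k\<in>{..<m}. N1 k \<omega>) \<in> M \<rightarrow>\<^sub>M PiM {..<m} (\<lambda>_. count_space UNIV)"
    and i_less: "i < m"
begin

abbreviation partitions :: "'a \<Rightarrow> nat \<Rightarrow> nat set" where
  "partitions \<omega> \<equiv> \<lambda>k\<in>{..<m}. N1 k \<omega>"

abbreviation partition_values :: "(nat \<Rightarrow> nat set) set" where
  "partition_values \<equiv> \<Pi>\<^sub>E k\<in>{..<m}. Pow {..<n k}"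

abbreviation data :: "'a \<Rightarrow> nat \<Rightarrow> nat \<Rightarrow> real" where
  "data \<omega> \<equiv> \<lambda>k\<in>{..<m}. \<lambda>j\<in>{..<n k}. X k j \<omega>"

abbreviation own_data :: "'a \<Rightarrow> nat \<Rightarrow> real" where
  "own_data \<omega> \<equiv> \<lambda>j\<in>{..<n i}. X i j \<omega>"

abbreviation T_others :: "'a \<Rightarrow> nat \<Rightarrow> real \<times> real" where
  "T_others \<omega> \<equiv> \<lambda>k\<in>{..<m} - {i}. TT n N1 X k \<omega>"

lemma measurable_N1: "k < m \<Longrightarrow> N1 k \<in> M \<rightarrow>\<^sub>M count_space (Pow {..<n k})"
  using measurable_compose[OF partitions_measurable measurable_component_singleton, of k] N1_subset
  by (subst measurable_count_space_eq_countable)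
    (auto simp: countable_finite measurable_sets[of _ M "count_space UNIV"])

lemma measurable_TT: "k < m \<Longrightarrow> TT n N1 X k \<in> borel_measurable M"
  unfolding TT_def[abs_def]
  by (rule measurable_compose_countable'[OF _ measurable_N1])
    (auto simp: countable_finite intro!: borel_measurable_T_stat X_measurable)

lemma measurable_T_others: "T_others \<in> M \<rightarrow>\<^sub>M PiM ({..<m} - {i}) (\<lambda>_. borel)"
  by (intro measurable_restrict measurable_TT) auto

lemma measurable_data: "data \<in> M \<rightarrow>\<^sub>M PiM {..<m} (\<lambda>k. PiM {..<n k} (\<lambda>_. borel))"
  by (intro measurable_restrict X_measurable) auto

lemma measurable_others_data: "others_data m n X i \<in> M \<rightarrow>\<^sub>M others_space m n i"
  unfolding others_data_def[abs_def] others_space_def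
  by (intro measurable_restrict X_measurable) auto

lemma measurable_own_data: "own_data \<in> M \<rightarrow>\<^sub>M PiM {..<n i} (\<lambda>_. borel)"
  by (intro measurable_restrict X_measurable i_less) auto

lemma singleton_partition_sets:
  assumes "a \<in> partition_values"
  shows "{a} \<in> sets (PiM {..<m} (\<lambda>_. count_space UNIV))"
proof -
  have "{a} = (\<Pi>\<^sub>E k\<in>{..<m}. {a k})"
    using assms by (simp add: PiE_singleton PiE_iff)
  then show ?thesis
    by (auto intro!: sets_PiM_I_finite)
qed

lemma sets_partitions_eq_others_data:
  assumes a: "a \<in> partition_values" and D: "D \<in> sets (others_space m n i)"
    and B: "B \<in> sets (PiM {..<n i} (\<lambda>_. borel))" and Z: "Z \<in> M \<rightarrow>\<^sub>M PiM {..<n i} (\<lambda>_. borel)"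
  shows "{\<omega>\<in>space M. partitions \<omega> = a \<and> others_data m n X i \<omega> \<in> D \<and> Z \<omega> \<in> B} \<in> events"
proof -
  have "{\<omega>\<in>space M. partitions \<omega> = a \<and> others_data m n X i \<omega> \<in> D \<and> Z \<omega> \<in> B}
      = (partitions -` {a} \<inter> space M) \<inter> (others_data m n X i -` D \<inter> space M) \<inter> (Z -` B \<inter> space M)"
    by auto
  then show ?thesis
    using measurable_sets[OF partitions_measurable singleton_partition_sets[OF a]]
      measurable_sets[OF measurable_others_data D] measurable_sets[OF Z B] by simp
qed

lemma borel_measurable_T_stat_others:
  assumes "a \<in> partition_values"
  shows "(\<lambda>y. \<lambda>k\<in>{..<m} - {i}. T_stat (n k) (a k) (y k))
    \<in> others_space m n i \<rightarrow>\<^sub>M PiM ({..<m} - {i}) (\<lambda>_. borel)"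
proof (rule measurable_restrict)
  fix k assume k: "k \<in> {..<m} - {i}"
  have "(\<lambda>y. y k j) \<in> borel_measurable (others_space m n i)" if "j \<in> {..<n k}" for j
    using measurable_compose[OF
        measurable_component_singleton[OF k, where M = "\<lambda>k. PiM {..<n k} (\<lambda>_. borel)"]
        measurable_component_singleton[OF that, where M = "\<lambda>_. borel"]]
    unfolding others_space_def by simp
  then show "(\<lambda>y. T_stat (n k) (a k) (y k)) \<in> borel_measurable (others_space m n i)"
    using k assms by (intro borel_measurable_T_stat) (auto simp: PiE_iff)
qed

lemma borel_measurable_T_stat_own:
  "a \<in> partition_values \<Longrightarrow> T_stat (n i) (a i) \<in> borel_measurable (PiM {..<n i} (\<lambda>_. borel))"
  using borel_measurable_T_stat[of "a i" "n i" "\<lambda>j z. z j"] i_less by (auto simp: PiE_iff)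

lemma TT_eq_T_stat:
  assumes "k < m" and "\<omega> \<in> space M"
  shows "TT n N1 X k \<omega> = T_stat (n k) (N1 k \<omega>) (\<lambda>j\<in>{..<n k}. X k j \<omega>)"
  unfolding TT_def using N1_subset[OF assms] by (intro T_stat_cong) auto

lemma T_others_eq_T_stat:
  "\<omega> \<in> space M \<Longrightarrow>
    T_others \<omega> = (\<lambda>k\<in>{..<m} - {i}. T_stat (n k) (partitions \<omega> k) (others_data m n X i \<omega> k))"
  by (auto simp: TT_eq_T_stat others_data_def)

lemma TT_own_eq_T_stat: "\<omega> \<in> space M \<Longrightarrow> TT n N1 X i \<omega> = T_stat (n i) (partitions \<omega> i) (own_data \<omega>)"
  using TT_eq_T_stat[OF i_less] i_less by simp

end

locale null_unit_model = random_partition_model +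
  assumes partitions_indep_data:
      "\<And>P B. P \<in> sets (PiM {..<m} (\<lambda>_. count_space UNIV)) \<Longrightarrow>
        B \<in> sets (PiM {..<m} (\<lambda>k. PiM {..<n k} (\<lambda>_. borel))) \<Longrightarrow>
        prob {\<omega>\<in>space M. partitions \<omega> \<in> P \<and> data \<omega> \<in> B}
        = prob {\<omega>\<in>space M. partitions \<omega> \<in> P} * prob {\<omega>\<in>space M. data \<omega> \<in> B}"
    and own_data_sign_symmetric:
      "\<And>b D B. b \<subseteq> {..<n i} \<Longrightarrow> D \<in> sets (others_space m n i) \<Longrightarrow>
        B \<in> sets (PiM {..<n i} (\<lambda>_. borel)) \<Longrightarrow>
        emeasure M {\<omega>\<in>space M. others_data m n X i \<omega> \<in> D \<and> sign_flip b (own_data \<omega>) \<in> B}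
        = emeasure M {\<omega>\<in>space M. others_data m n X i \<omega> \<in> D \<and> own_data \<omega> \<in> B}"
begin

lemma prob_partitions_eq_and_data:
  assumes a: "a \<in> partition_values"
    and D: "D \<in> sets (others_space m n i)" and B: "B \<in> sets (PiM {..<n i} (\<lambda>_. borel))"
  shows "prob {\<omega>\<in>space M. partitions \<omega> = a \<and> others_data m n X i \<omega> \<in> D \<and> own_data \<omega> \<in> B}
    = prob {\<omega>\<in>space M. partitions \<omega> = a} * prob {\<omega>\<in>space M. others_data m n X i \<omega> \<in> D \<and> own_data \<omega> \<in> B}"
proof -
  let ?W = "PiM {..<m} (\<lambda>k. PiM {..<n k} (\<lambda>_. borel :: real measure))"
  define E where "E = {w \<in> space ?W. restrict w ({..<m} - {i}) \<in> D \<and> w i \<in> B}"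
  have "(\<lambda>w. restrict w ({..<m} - {i})) \<in> ?W \<rightarrow>\<^sub>M others_space m n i"
    unfolding others_space_def by (rule measurable_restrict_subset) auto
  moreover have "(\<lambda>w. w i) \<in> ?W \<rightarrow>\<^sub>M PiM {..<n i} (\<lambda>_. borel)"
    using measurable_component_singleton[of i "{..<m}"] i_less by simp
  ultimately have "E \<in> sets ?W"
    unfolding E_def using D B by measurable
  moreover have "data \<omega> \<in> E \<longleftrightarrow> others_data m n X i \<omega> \<in> D \<and> own_data \<omega> \<in> B" if "\<omega> \<in> space M" for \<omega>
  proof -
    have "restrict (data \<omega>) ({..<m} - {i}) = others_data m n X i \<omega>"
      by (auto simp: others_data_def fun_eq_iff)
    then show ?thesis
      using that measurable_space[OF measurable_data] i_less by (simp add: E_def)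
  qed
  then have event_eq: "{\<omega>\<in>space M. P \<omega> \<and> data \<omega> \<in> E}
      = {\<omega>\<in>space M. P \<omega> \<and> others_data m n X i \<omega> \<in> D \<and> own_data \<omega> \<in> B}" for P
    by blast
  ultimately show ?thesis
    using partitions_indep_data[OF singleton_partition_sets[OF a], of E]
      event_eq[of "\<lambda>\<omega>. partitions \<omega> = a"] event_eq[of "\<lambda>_. True"]
    by simp
qed

lemma prob_partitions_eq_sign_flip:
  assumes a: "a \<in> partition_values"
    and D: "D \<in> sets (others_space m n i)" and B: "B \<in> sets (PiM {..<n i} (\<lambda>_. borel))"
  shows "prob {\<omega>\<in>space M. partitions \<omega> = a \<and> others_data m n X i \<omega> \<in> D
      \<and> sign_flip (flip_set (n i) (a i)) (own_data \<omega>) \<in> B}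
    = prob {\<omega>\<in>space M. partitions \<omega> = a \<and> others_data m n X i \<omega> \<in> D \<and> own_data \<omega> \<in> B}"
proof -
  define b where "b = flip_set (n i) (a i)"
  define B' where "B' = sign_flip b -` B \<inter> space (PiM {..<n i} (\<lambda>_. borel :: real measure))"
  have B': "B' \<in> sets (PiM {..<n i} (\<lambda>_. borel))"
    unfolding B'_def using measurable_sign_flip[OF flip_set_subset] B unfolding b_def by (rule measurable_sets)
  have flip_event: "{\<omega>\<in>space M. P \<omega> \<and> sign_flip b (own_data \<omega>) \<in> B}
      = {\<omega>\<in>space M. P \<omega> \<and> own_data \<omega> \<in> B'}" for P
    using measurable_space[OF measurable_own_data] by (auto simp: B'_def)
  have "prob {\<omega>\<in>space M. others_data m n X i \<omega> \<in> D \<and> sign_flip b (own_data \<omega>) \<in> B}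
      = prob {\<omega>\<in>space M. others_data m n X i \<omega> \<in> D \<and> own_data \<omega> \<in> B}"
    using own_data_sign_symmetric[OF flip_set_subset D B] by (simp add: measure_def b_def)
  then show ?thesis
    using flip_event[of "\<lambda>\<omega>. partitions \<omega> = a \<and> others_data m n X i \<omega> \<in> D"]
      flip_event[of "\<lambda>\<omega>. others_data m n X i \<omega> \<in> D"]
      prob_partitions_eq_and_data[OF a D B'] prob_partitions_eq_and_data[OF a D B]
    by (simp add: b_def conj_assoc)
qed

lemma prob_sign_flip_by_partitions:
  assumes D: "\<And>a. a \<in> partition_values \<Longrightarrow> D a \<in> sets (others_space m n i)"
    and B: "\<And>a. a \<in> partition_values \<Longrightarrow> B a \<in> sets (PiM {..<n i} (\<lambda>_. borel))"
  shows "prob {\<omega>\<in>space M. others_data m n X i \<omega> \<in> D (partitions \<omega>) \<and> own_data \<omega> \<in> B (partitions \<omega>)}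
    = prob {\<omega>\<in>space M. others_data m n X i \<omega> \<in> D (partitions \<omega>)
        \<and> sign_flip (flip_set (n i) (partitions \<omega> i)) (own_data \<omega>) \<in> B (partitions \<omega>)}"
proof (rule measure_eq_by_finite_cases[where g = partitions and C = partition_values
    and P = "\<lambda>a \<omega>. others_data m n X i \<omega> \<in> D a \<and> own_data \<omega> \<in> B a"
    and Q = "\<lambda>a \<omega>. others_data m n X i \<omega> \<in> D a \<and> sign_flip (flip_set (n i) (a i)) (own_data \<omega>) \<in> B a"])
  show "finite partition_values"
    by (simp add: finite_PiE)
  show "partitions \<omega> \<in> partition_values" if "\<omega> \<in> space M" for \<omega>
    using N1_subset that by auto
  fix a assume a: "a \<in> partition_values"
  have "sign_flip (flip_set (n i) (a i)) \<in> PiM {..<n i} (\<lambda>_. borel) \<rightarrow>\<^sub>M PiM {..<n i} (\<lambda>_. borel)"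
    by (rule measurable_sign_flip[OF flip_set_subset])
  from measurable_compose[OF measurable_own_data this]
  show "{\<omega>\<in>space M. partitions \<omega> = a \<and> others_data m n X i \<omega> \<in> D a
      \<and> sign_flip (flip_set (n i) (a i)) (own_data \<omega>) \<in> B a} \<in> events"
    by (rule sets_partitions_eq_others_data[OF a D[OF a] B[OF a]])
  show "{\<omega>\<in>space M. partitions \<omega> = a \<and> others_data m n X i \<omega> \<in> D a \<and> own_data \<omega> \<in> B a} \<in> events"
    by (rule sets_partitions_eq_others_data[OF a D[OF a] B[OF a] measurable_own_data])
  show "prob {\<omega>\<in>space M. partitions \<omega> = a \<and> others_data m n X i \<omega> \<in> D a \<and> own_data \<omega> \<in> B a}
    = prob {\<omega>\<in>space M. partitions \<omega> = a \<and> others_data m n X i \<omega> \<in> D a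
        \<and> sign_flip (flip_set (n i) (a i)) (own_data \<omega>) \<in> B a}"
    using prob_partitions_eq_sign_flip[OF a D[OF a] B[OF a]] by simp
qed

lemma prob_T_others_swap:
  assumes D: "D \<in> sets (PiM ({..<m} - {i}) (\<lambda>_. borel))" and A: "A \<in> sets borel"
  shows "prob {\<omega>\<in>space M. T_others \<omega> \<in> D \<and> TT n N1 X i \<omega> \<in> A}
    = prob {\<omega>\<in>space M. T_others \<omega> \<in> D \<and> prod.swap (TT n N1 X i \<omega>) \<in> A}"
proof -
  define others_event where
    "others_event a = {y \<in> space (others_space m n i). (\<lambda>k\<in>{..<m} - {i}. T_stat (n k) (a k) (y k)) \<in> D}"
    for a
  define own_event where
    "own_event a = {z \<in> space (PiM {..<n i} (\<lambda>_. borel)). T_stat (n i) (a i) z \<in> A}" for a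
  have others_event: "others_event a \<in> sets (others_space m n i)" if "a \<in> partition_values" for a
    using measurable_sets[OF borel_measurable_T_stat_others[OF that] D]
    by (simp add: others_event_def vimage_def Int_def conj_commute)
  have own_event: "own_event a \<in> sets (PiM {..<n i} (\<lambda>_. borel))" if "a \<in> partition_values" for a
    using measurable_sets[OF borel_measurable_T_stat_own[OF that] A]
    by (simp add: own_event_def vimage_def Int_def conj_commute)
  have "{\<omega>\<in>space M. T_others \<omega> \<in> D \<and> TT n N1 X i \<omega> \<in> A}
    = {\<omega>\<in>space M. others_data m n X i \<omega> \<in> others_event (partitions \<omega>)
        \<and> own_data \<omega> \<in> own_event (partitions \<omega>)}"
    using measurable_space[OF measurable_others_data] measurable_space[OF measurable_own_data] i_less
    by (auto simp: others_event_def own_event_def T_others_eq_T_stat TT_own_eq_T_stat)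
  moreover have "{\<omega>\<in>space M. T_others \<omega> \<in> D \<and> prod.swap (TT n N1 X i \<omega>) \<in> A}
    = {\<omega>\<in>space M. others_data m n X i \<omega> \<in> others_event (partitions \<omega>)
        \<and> sign_flip (flip_set (n i) (partitions \<omega> i)) (own_data \<omega>) \<in> own_event (partitions \<omega>)}"
    using measurable_space[OF measurable_others_data] i_less
      measurable_space[OF measurable_compose[OF measurable_own_data measurable_sign_flip[OF flip_set_subset]]]
    by (auto simp: others_event_def own_event_def T_others_eq_T_stat TT_own_eq_T_stat T_stat_sign_flip)
  ultimately show ?thesis
    using prob_sign_flip_by_partitions[of others_event own_event, OF others_event own_event] by simp
qed

lemma AE_cond_prob_TT_swap:
  assumes A: "A \<in> sets borel"
  shows "AE \<omega> in M. real_cond_exp M (cond_alg M m n N1 X i) (\<lambda>\<omega>. indicator A (TT n N1 X i \<omega>)) \<omega>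
    = real_cond_exp M (cond_alg M m n N1 X i) (\<lambda>\<omega>. indicator A (prod.swap (TT n N1 X i \<omega>))) \<omega>"
proof -
  have swap_measurable: "(\<lambda>\<omega>. prod.swap (TT n N1 X i \<omega>)) \<in> borel_measurable M"
    using measurable_TT[OF i_less] borel_measurable_continuous_onI[OF continuous_on_swap]
    by (rule measurable_compose)
  show ?thesis
    unfolding cond_alg_def
    by (rule AE_real_cond_exp_indicator_eq[OF measurable_T_others measurable_TT[OF i_less] swap_measurable A
          prob_T_others_swap[OF _ A]])
qed

end

theorem theorem1:
  fixes M :: "'a measure" and m :: nat and n :: "nat \<Rightarrow> nat" and \<mu> :: "nat \<Rightarrow> real"
    and X :: "nat \<Rightarrow> nat \<Rightarrow> 'a \<Rightarrow> real" and N1 :: "nat \<Rightarrow> 'a \<Rightarrow> nat set" and i :: nat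
  assumes "prob_space M"
    and "m \<ge> 1"
    and "\<forall>k<m. n k \<ge> 2"
    and "\<forall>k<m. \<forall>j<n k. X k j \<in> borel_measurable M"
    and "\<forall>k<m. \<forall>j<n k. integrable M (\<lambda>\<omega>. X k j \<omega> - \<mu> k) \<and> (\<integral>\<omega>. X k j \<omega> - \<mu> k \<partial>M) = 0"
    and "\<forall>k<m. \<forall>\<omega>\<in>space M. N1 k \<omega> \<subseteq> {..<n k} \<and> card (N1 k \<omega>) = (n k + 1) div 2"
    and "(\<lambda>\<omega>. \<lambda>k\<in>{..<m}. N1 k \<omega>) \<in> M \<rightarrow>\<^sub>M PiM {..<m} (\<lambda>_. count_space UNIV)"
    and "\<forall>A\<in>sets (PiM {..<m} (\<lambda>_. count_space UNIV)).
         \<forall>B\<in>sets (PiM {..<m} (\<lambda>k. PiM {..<n k} (\<lambda>_. borel))).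
           measure M {\<omega>\<in>space M. (\<lambda>k\<in>{..<m}. N1 k \<omega>) \<in> A \<and>
                                   (\<lambda>k\<in>{..<m}. \<lambda>j\<in>{..<n k}. X k j \<omega>) \<in> B}
           = measure M {\<omega>\<in>space M. (\<lambda>k\<in>{..<m}. N1 k \<omega>) \<in> A} *
             measure M {\<omega>\<in>space M. (\<lambda>k\<in>{..<m}. \<lambda>j\<in>{..<n k}. X k j \<omega>) \<in> B}"
    and "i < m" and "\<mu> i = 0"
    and "\<exists>f :: (nat \<Rightarrow> nat \<Rightarrow> real) \<Rightarrow> real \<Rightarrow> real.
           (\<lambda>(y, x). f y x) \<in> borel_measurable (others_space m n i \<Otimes>\<^sub>M borel) \<and>
           (\<forall>y x. f y x \<ge> 0) \<and>
           (\<forall>y\<in>space (others_space m n i). (\<integral>\<^sup>+ x. ennreal (f y x) \<partial>lborel) = 1) \<and>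
           (\<forall>y x. f y (- x) = f y x) \<and>
           (\<forall>A\<in>sets (others_space m n i). \<forall>B\<in>sets (PiM {..<n i} (\<lambda>_. borel)).
              emeasure M {\<omega>\<in>space M. others_data m n X i \<omega> \<in> A \<and>
                                      (\<lambda>j\<in>{..<n i}. X i j \<omega> - \<mu> i) \<in> B}
              = (\<integral>\<^sup>+ \<omega>. indicator A (others_data m n X i \<omega>) *
                    (\<integral>\<^sup>+ e. indicator B e * (\<Prod>j<n i. ennreal (f (others_data m n X i \<omega>) (e j)))
                       \<partial>PiM {..<n i} (\<lambda>_. lborel)) \<partial>M))"
  shows "\<forall>A\<in>sets (borel :: (real \<times> real) measure).
           AE \<omega> in M.
             real_cond_exp M (cond_alg M m n N1 X i) (\<lambda>\<omega>. indicator A (TT n N1 X i \<omega>)) \<omega>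
           = real_cond_exp M (cond_alg M m n N1 X i) (\<lambda>\<omega>. indicator A (prod.swap (TT n N1 X i \<omega>))) \<omega>"
proof -
  interpret random_partition_model M m n X N1 i
    by (intro random_partition_model.intro random_partition_model_axioms.intro)
      (use assms(1,4,6,7,9) in blast)+
  obtain f :: "(nat \<Rightarrow> nat \<Rightarrow> real) \<Rightarrow> real \<Rightarrow> real" where
    f_meas: "(\<lambda>(y, x). f y x) \<in> borel_measurable (others_space m n i \<Otimes>\<^sub>M borel)"
    and f_even: "\<forall>y x. f y (- x) = f y x"
    and density: "\<forall>D\<in>sets (others_space m n i). \<forall>B\<in>sets (PiM {..<n i} (\<lambda>_. borel)).
      emeasure M {\<omega>\<in>space M. others_data m n X i \<omega> \<in> D \<and> (\<lambda>j\<in>{..<n i}. X i j \<omega> - \<mu> i) \<in> B}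
      = (\<integral>\<^sup>+ \<omega>. indicator D (others_data m n X i \<omega>) *
          (\<integral>\<^sup>+ e. indicator B e * (\<Prod>j<n i. ennreal (f (others_data m n X i \<omega>) (e j)))
             \<partial>PiM {..<n i} (\<lambda>_. lborel)) \<partial>M)"
    using assms(11) by blast
  interpret null_unit_model M m n X N1 i
  proof unfold_locales
    show "emeasure M {\<omega>\<in>space M. others_data m n X i \<omega> \<in> D \<and> sign_flip b (own_data \<omega>) \<in> B}
        = emeasure M {\<omega>\<in>space M. others_data m n X i \<omega> \<in> D \<and> own_data \<omega> \<in> B}"
      if "b \<subseteq> {..<n i}" and "D \<in> sets (others_space m n i)" and "B \<in> sets (PiM {..<n i} (\<lambda>_. borel))"
      for b D B
      using measurable_others_data measurable_own_data finite_lessThan that(1) _ _ _ that(2,3)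
    proof (rule emeasure_sign_flip_eq_of_symmetric_density)
      show "f y \<in> borel_measurable borel" if "y \<in> space (others_space m n i)" for y
        using measurable_Pair2[OF f_meas that] by simp
    qed (use f_even density \<open>\<mu> i = 0\<close> in simp_all)
  qed (use assms(8) in blast)
  show ?thesis
    using AE_cond_prob_TT_swap by blast
qed

end
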